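(* Let $C$ be a small category. If there is a non-identity morphism $X\to Y$ in $Sd(C)$, then $\dim(X)<\dim(Y)$, where $\dim$ of a simplex is its dimension $q_X$.
   Context: For $q\ge0$, $[q]=\{0<\dots<q\}$ viewed as a category. A $q$-simplex of the nerve $NC$ is a functor $X:[q]\to C$ (a chain of $q$ composable arrows); $q_X=q$ is its dimension. It is degenerate if $X=Y\circ s$ for a simplex $Y$ and surjective order-preserving $s:[q]\to[p]$ with $p<q$ (equivalently some arrow $X_{i-1}\to X_i$ is an identity), non-degenerate otherwise. $\Delta/C$ has all simplices as objects and as morphisms $X\to Y$ the order-preserving $\xi:[q_X]\to[q_Y]$ with $Y\circ\xi=X$, written $\xi_*$. For a $q$-simplex $X$ and surjective order-preserving $s:[q+1]\to[q]$ with order-preserving right inverses $d,d'$, $d_*,d'_*:X\to X\circ s$ are elementary equivalent; $\sim$ is the smallest equivalence relation on morphisms of $\Delta/C$ compatible with composition containing these pairs; $[\Delta/C]$ is the quotient category; $Sd(C)$ is the full subcategory of $[\Delta/C]$ on the non-degenerate simplices. *)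

theory Defs
  imports Main
begin

record ('o,'a) cat =
  Obj :: "'o set"
  Arr :: "'a set"
  Dom :: "'a \<Rightarrow> 'o"
  Cod :: "'a \<Rightarrow> 'o"
  Id  :: "'o \<Rightarrow> 'a"
  Comp :: "'a \<Rightarrow> 'a \<Rightarrow> 'a"   (* Comp C g f = g o f *)

definition is_category :: "('o,'a) cat \<Rightarrow> bool" where
  "is_category C \<longleftrightarrow>
     (\<forall>f\<in>Arr C. Dom C f \<in> Obj C \<and> Cod C f \<in> Obj C) \<and>
     (\<forall>x\<in>Obj C. Id C x \<in> Arr C \<and> Dom C (Id C x) = x \<and> Cod C (Id C x) = x) \<and>
     (\<forall>f\<in>Arr C. \<forall>g\<in>Arr C. Cod C f = Dom C g \<longrightarrow>
         Comp C g f \<in> Arr C \<and> Dom C (Comp C g f) = Dom C f \<and> Cod C (Comp C g f) = Cod C g) \<and>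
     (\<forall>f\<in>Arr C. Comp C f (Id C (Dom C f)) = f \<and> Comp C (Id C (Cod C f)) f = f) \<and>
     (\<forall>f\<in>Arr C. \<forall>g\<in>Arr C. \<forall>h\<in>Arr C. Cod C f = Dom C g \<longrightarrow> Cod C g = Dom C h \<longrightarrow>
         Comp C h (Comp C g f) = Comp C (Comp C h g) f)"

text \<open>A q-simplex of the nerve: a functor [q] -> C, given as (q, object map, arrow map),
  where the arrow map sends i \<le> j \<le> q to the arrow X(i\<le>j); both maps are extensional
  (undefined outside their domain) so that equality of simplices is equality of functors.\<close>
type_synonym ('o,'a) simplex = "nat \<times> (nat \<Rightarrow> 'o) \<times> (nat \<Rightarrow> nat \<Rightarrow> 'a)"

definition sdim :: "('o,'a) simplex \<Rightarrow> nat" where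
  "sdim X = fst X"

definition is_simplex :: "('o,'a) cat \<Rightarrow> ('o,'a) simplex \<Rightarrow> bool" where
  "is_simplex C X = (case X of (q, ob, F) \<Rightarrow>
     (\<forall>i\<le>q. ob i \<in> Obj C) \<and> (\<forall>i. q < i \<longrightarrow> ob i = undefined) \<and>
     (\<forall>i j. i \<le> j \<and> j \<le> q \<longrightarrow> F i j \<in> Arr C \<and> Dom C (F i j) = ob i \<and> Cod C (F i j) = ob j) \<and>
     (\<forall>i j. \<not> (i \<le> j \<and> j \<le> q) \<longrightarrow> F i j = undefined) \<and>
     (\<forall>i\<le>q. F i i = Id C (ob i)) \<and>
     (\<forall>i j k. i \<le> j \<and> j \<le> k \<and> k \<le> q \<longrightarrow> Comp C (F j k) (F i j) = F i k))"

definition ordmap :: "nat \<Rightarrow> nat \<Rightarrow> (nat \<Rightarrow> nat) \<Rightarrow> bool" where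
  "ordmap q p \<xi> \<longleftrightarrow> (\<forall>i\<le>q. \<xi> i \<le> p) \<and> (\<forall>i j. i \<le> j \<and> j \<le> q \<longrightarrow> \<xi> i \<le> \<xi> j) \<and>
     (\<forall>i. q < i \<longrightarrow> \<xi> i = undefined)"

definition precomp :: "('o,'a) simplex \<Rightarrow> nat \<Rightarrow> (nat \<Rightarrow> nat) \<Rightarrow> ('o,'a) simplex" where
  "precomp Y p \<xi> = (case Y of (q, ob, F) \<Rightarrow>
     (p, \<lambda>i. if i \<le> p then ob (\<xi> i) else undefined,
         \<lambda>i j. if i \<le> j \<and> j \<le> p then F (\<xi> i) (\<xi> j) else undefined))"

definition degenerate :: "('o,'a) cat \<Rightarrow> ('o,'a) simplex \<Rightarrow> bool" where
  "degenerate C X \<longleftrightarrow> (\<exists>Y p s. is_simplex C Y \<and> sdim Y = p \<and> p < sdim X \<and>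
      ordmap (sdim X) p s \<and> s ` {..sdim X} = {..p} \<and> X = precomp Y (sdim X) s)"

definition nondegenerate :: "('o,'a) cat \<Rightarrow> ('o,'a) simplex \<Rightarrow> bool" where
  "nondegenerate C X \<longleftrightarrow> is_simplex C X \<and> \<not> degenerate C X"

text \<open>Morphisms of \<Delta>/C: triples (source, \<xi>, target).\<close>
type_synonym ('o,'a) dcmor = "('o,'a) simplex \<times> (nat \<Rightarrow> nat) \<times> ('o,'a) simplex"

definition dc_mor :: "('o,'a) cat \<Rightarrow> ('o,'a) dcmor \<Rightarrow> bool" where
  "dc_mor C m = (case m of (X, \<xi>, Y) \<Rightarrow>
     is_simplex C X \<and> is_simplex C Y \<and> ordmap (sdim X) (sdim Y) \<xi> \<and> precomp Y (sdim X) \<xi> = X)"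

definition dc_id :: "('o,'a) simplex \<Rightarrow> ('o,'a) dcmor" where
  "dc_id X = (X, \<lambda>i. if i \<le> sdim X then i else undefined, X)"

text \<open>dc_comp g f = g o f (assumes target of f = source of g).\<close>
definition dc_comp :: "('o,'a) dcmor \<Rightarrow> ('o,'a) dcmor \<Rightarrow> ('o,'a) dcmor" where
  "dc_comp g f = (case f of (X, \<xi>, _) \<Rightarrow> case g of (_, \<eta>, Z) \<Rightarrow>
     (X, \<lambda>i. if i \<le> sdim X then \<eta> (\<xi> i) else undefined, Z))"

inductive dc_sim :: "('o,'a) cat \<Rightarrow> ('o,'a) dcmor \<Rightarrow> ('o,'a) dcmor \<Rightarrow> bool" for C where
  elem: "\<lbrakk> is_simplex C X; sdim X = q; ordmap (Suc q) q s; s ` {..Suc q} = {..q};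
           ordmap q (Suc q) d; ordmap q (Suc q) d';
           \<forall>i\<le>q. s (d i) = i; \<forall>i\<le>q. s (d' i) = i \<rbrakk>
         \<Longrightarrow> dc_sim C (X, d, precomp X (Suc q) s) (X, d', precomp X (Suc q) s)"
| refl: "dc_mor C m \<Longrightarrow> dc_sim C m m"
| sym: "dc_sim C m m' \<Longrightarrow> dc_sim C m' m"
| trans: "dc_sim C m m' \<Longrightarrow> dc_sim C m' m'' \<Longrightarrow> dc_sim C m m''"
| comp: "dc_sim C (X, \<xi>, Y) (X', \<xi>', Y') \<Longrightarrow> dc_sim C (Y, \<eta>, Z) (Y', \<eta>', Z')
         \<Longrightarrow> dc_sim C (dc_comp (Y, \<eta>, Z) (X, \<xi>, Y)) (dc_comp (Y', \<eta>', Z') (X', \<xi>', Y'))"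

end

theory Submission
  imports Defs
begin

text \<open>A morphism \<open>\<xi>\<^sub>*: X \<rightarrow> Y\<close> between simplices with \<open>X\<close> non-degenerate makes \<open>\<xi>\<close>
  strictly increasing: if \<open>\<xi>(i-1) = \<xi>(i)\<close>, the arrow \<open>X(i-1 \<le> i) = Y(\<xi> i \<le> \<xi> i)\<close> is an
  identity and \<open>X\<close> factors through the codegeneracy collapsing \<open>i-1\<close> and \<open>i\<close>. A strictly
  increasing map \<open>[q] \<rightarrow> [p]\<close> forces \<open>q \<le> p\<close>, and for \<open>q = p\<close> it is the identity, so then
  \<open>X = Y\<close> and \<open>\<xi>\<^sub>*\<close> is the identity morphism.\<close>

lemma is_simplex_precomp:
  assumes "is_simplex C (q, ob, F)" "ordmap p q \<xi>"
  shows "is_simplex C (precomp (q, ob, F) p \<xi>)"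
  using assms unfolding is_simplex_def precomp_def ordmap_def
  by (auto simp del: le_refl)

lemma precomp_precomp:
  assumes "ordmap q p \<xi>"
  shows "precomp (precomp Y p \<eta>) q \<xi> = precomp Y q (\<lambda>i. if i \<le> q then \<eta> (\<xi> i) else undefined)"
  using assms unfolding precomp_def ordmap_def
  by (cases Y) (auto intro!: ext)

lemma precomp_identity:
  assumes "is_simplex C Y"
  shows "precomp Y (sdim Y) (\<lambda>i. if i \<le> sdim Y then i else undefined) = Y"
  using assms unfolding is_simplex_def precomp_def sdim_def
  by (cases Y) (auto intro!: ext simp: not_le)

lemma precomp_collapse_identity_arrow:
  assumes cat: "is_category C" and X: "is_simplex C (q, ob, F)"
    and i: "0 < i" "i \<le> q" and idarr: "F (i-1) i = Id C (ob i)"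
  shows "precomp (q, ob, F) q (\<lambda>a. if a \<le> q then (if a = i then i - 1 else a) else undefined)
         = (q, ob, F)"
proof -
  let ?r = "\<lambda>a. if a = i then i - 1 else a"
  have arr: "\<And>a b. a \<le> b \<Longrightarrow> b \<le> q \<Longrightarrow> F a b \<in> Arr C \<and> Dom C (F a b) = ob a \<and> Cod C (F a b) = ob b"
    and comp: "\<And>a b c. a \<le> b \<Longrightarrow> b \<le> c \<Longrightarrow> c \<le> q \<Longrightarrow> Comp C (F b c) (F a b) = F a c"
    and ob_undef: "\<And>a. q < a \<Longrightarrow> ob a = undefined"
    and F_undef: "\<And>a b. \<not> (a \<le> b \<and> b \<le> q) \<Longrightarrow> F a b = undefined"
    and F_id: "\<And>a. a \<le> q \<Longrightarrow> F a a = Id C (ob a)"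
    using X unfolding is_simplex_def by auto
  have unit: "\<And>f. f \<in> Arr C \<Longrightarrow> Comp C f (Id C (Dom C f)) = f \<and> Comp C (Id C (Cod C f)) f = f"
    using cat unfolding is_category_def by blast
  have ob_eq: "ob (i-1) = ob i"
    using arr[of "i-1" i] i idarr cat X unfolding is_category_def is_simplex_def by auto
  have F_left: "F (i-1) b = F i b" if "i \<le> b" "b \<le> q" for b
  proof -
    have "F (i-1) b = Comp C (F i b) (Id C (ob i))"
      using comp[of "i-1" i b] that idarr by simp
    also have "\<dots> = F i b" using unit[of "F i b"] arr[of i b] that by simp
    finally show ?thesis .
  qed
  have F_right: "F a (i-1) = F a i" if "a \<le> i - 1" for a
  proof -
    have "F a i = Comp C (Id C (ob (i-1))) (F a (i-1))"
      using comp[of a "i-1" i] that i idarr ob_eq by simp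
    also have "\<dots> = F a (i-1)" using unit[of "F a (i-1)"] arr[of a "i-1"] that i by simp
    finally show ?thesis by simp
  qed
  have F_r: "F (?r a) (?r b) = F a b" if ab: "a \<le> b" "b \<le> q" for a b
  proof -
    consider "a = i" "b = i" | "a = i" "i < b" | "a < i" "b = i" | "a \<noteq> i" "b \<noteq> i"
      using ab by (cases "a = i"; cases "b = i") auto
    then show ?thesis
    proof cases
      case 1
      then show ?thesis using F_id[of i] F_id[of "i-1"] i ob_eq by simp
    qed (use F_left F_right ab in auto)
  qed
  show ?thesis
    unfolding precomp_def
    using ob_eq F_r ob_undef F_undef by (auto intro!: ext simp: not_le)
qed

lemma degenerate_if_identity_arrow:
  assumes cat: "is_category C" and X: "is_simplex C (q, ob, F)"
    and i: "0 < i" "i \<le> q" and idarr: "F (i-1) i = Id C (ob i)"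
  shows "degenerate C (q, ob, F)"
proof -
  define d where "d = (\<lambda>j. if j \<le> q - 1 then (if j < i then j else Suc j) else undefined)"
  define s where "s = (\<lambda>j. if j \<le> q then (if j < i then j else j - 1) else undefined)"
  have d: "ordmap (q-1) q d" using i unfolding ordmap_def d_def by auto
  have s: "ordmap q (q-1) s" using i unfolding ordmap_def s_def by auto
  have s_onto: "s ` {..q} = {..q-1}"
  proof
    show "s ` {..q} \<subseteq> {..q-1}" using i unfolding s_def by auto
    show "{..q-1} \<subseteq> s ` {..q}"
    proof
      fix j assume "j \<in> {..q-1}"
      then have "j = s (if j < i then j else Suc j)" "(if j < i then j else Suc j) \<le> q"
        using i unfolding s_def by auto
      then show "j \<in> s ` {..q}" by blast
    qed
  qed
  have "precomp (precomp (q, ob, F) (q-1) d) q s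
        = precomp (q, ob, F) q (\<lambda>a. if a \<le> q then (if a = i then i - 1 else a) else undefined)"
    unfolding precomp_precomp[OF s]
    by (rule arg_cong[where f = "precomp _ q"]) (use i in \<open>auto intro!: ext simp: d_def s_def\<close>)
  also have "\<dots> = (q, ob, F)"
    using precomp_collapse_identity_arrow[OF cat X i idarr] .
  finally have "(q, ob, F) = precomp (precomp (q, ob, F) (q-1) d) q s" ..
  moreover have "is_simplex C (precomp (q, ob, F) (q-1) d)"
    using is_simplex_precomp[OF X d] .
  moreover have "sdim (precomp (q, ob, F) (q-1) d) = q - 1" "sdim (q, ob, F) = q" "q - 1 < q"
    using i by (simp_all add: precomp_def sdim_def)
  ultimately show ?thesis
    unfolding degenerate_def using s s_onto by metis
qed

lemma dc_mor_from_nondegenerate_strict: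
  assumes cat: "is_category C" and X: "nondegenerate C X" and mor: "dc_mor C (X, \<xi>, Y)"
    and i: "0 < i" "i \<le> sdim X"
  shows "\<xi> (i-1) < \<xi> i"
proof (rule ccontr)
  obtain q obX FX where X_eq: "X = (q, obX, FX)" by (cases X)
  obtain p obY FY where Y_eq: "Y = (p, obY, FY)" by (cases Y)
  have q: "sdim X = q" by (simp add: X_eq sdim_def)
  have \<xi>: "ordmap q p \<xi>" and X_pre: "precomp Y q \<xi> = X" and Y: "is_simplex C Y"
    using mor q unfolding dc_mor_def by (auto simp: Y_eq sdim_def)
  assume "\<not> \<xi> (i-1) < \<xi> i"
  then have "\<xi> (i-1) = \<xi> i"
    using \<xi> i q unfolding ordmap_def by (metis diff_le_self le_less_trans linorder_neqE_nat not_le)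
  then have "FX (i-1) i = Id C (obX i)"
    using X_pre \<xi> Y i q unfolding X_eq Y_eq precomp_def ordmap_def is_simplex_def by auto
  then have "degenerate C X"
    using degenerate_if_identity_arrow[OF cat _ i[unfolded q]] X
    unfolding X_eq nondegenerate_def by blast
  then show False using X unfolding nondegenerate_def by blast
qed

lemma stepwise_strict_add_le:
  fixes f :: "nat \<Rightarrow> nat"
  assumes step: "\<And>k. 0 < k \<Longrightarrow> k \<le> q \<Longrightarrow> f (k-1) < f k" and "i \<le> j" "j \<le> q"
  shows "f i + (j - i) \<le> f j"
  using assms(2,3)
proof (induction j)
  case (Suc j)
  show ?case
  proof (cases "i = Suc j")
    case False
    then show ?thesis using Suc step[of "Suc j"] by simp
  qed simp
qed simp

theorem lemma19:
  fixes C :: "('o,'a) cat" and X Y :: "('o,'a) simplex" and \<xi> :: "nat \<Rightarrow> nat"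
  assumes "is_category C"
    and "nondegenerate C X" and "nondegenerate C Y"
    and "dc_mor C (X, \<xi>, Y)"
    and "\<not> (X = Y \<and> dc_sim C (X, \<xi>, Y) (dc_id X))"
  shows "sdim X < sdim Y"
proof (rule ccontr)
  let ?q = "sdim X"
  have \<xi>: "ordmap ?q (sdim Y) \<xi>" and X_pre: "precomp Y ?q \<xi> = X" and Y: "is_simplex C Y"
    using assms(4) unfolding dc_mor_def by auto
  have \<xi>_le: "\<xi> ?q \<le> sdim Y" using \<xi> unfolding ordmap_def by simp
  note step_le = stepwise_strict_add_le[where f = \<xi> and q = ?q,
      OF dc_mor_from_nondegenerate_strict[OF assms(1,2,4)]]
  have "?q \<le> sdim Y"
    using step_le[of 0 ?q] \<xi>_le by simp
  moreover assume "\<not> ?q < sdim Y"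
  ultimately have dims: "sdim Y = ?q" by simp
  have "\<xi> i = i" if "i \<le> ?q" for i
    using step_le[of 0 i] step_le[of i ?q] that \<xi>_le dims by simp
  then have \<xi>_id: "\<xi> = (\<lambda>i. if i \<le> ?q then i else undefined)"
    using \<xi> unfolding ordmap_def by (auto simp: not_le)
  then have "X = Y"
    using X_pre precomp_identity[OF Y] dims by simp
  moreover have "dc_sim C (X, \<xi>, Y) (dc_id X)"
    using dc_sim.refl[OF assms(4)] \<open>X = Y\<close> \<xi>_id unfolding dc_id_def by simp
  ultimately show False using assms(5) by blast
qed

end
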